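(* Let $T$ be a coherent LCMM tree, $\boldsymbol\theta=\boldsymbol\theta(T)$, $\boldsymbol\eta=\boldsymbol\eta(T)$, and let $\boldsymbol\mu=\tilde{\boldsymbol p}(\boldsymbol\theta+\mathbf A\boldsymbol\eta)$ be the current LCMM price vector. Let $\alpha\in\Omega$ and $I=[\alpha,1)$. Consider the following procedure (Algorithm 3). Initialize $z\gets\mathit{root}$, $\mu_z\gets1$, $\mathit{price}\gets0$. While $\alpha_z\ne\alpha$ and $z$ is not a leaf of $T$: let $z_l=\mathrm{left}(z)$, $z_r=\mathrm{right}(z)$, $k=\mathrm{level}(z_l)$; compute $e_l=\exp\{(\theta_{z_l}+B_k\eta_{z_l})/b_k\}$, $e_r=\exp\{(\theta_{z_r}+B_k\eta_{z_r})/b_k\}$, $\mu_{z_l}\gets\frac{e_l}{e_l+e_r}\mu_z$, $\mu_{z_r}\gets\frac{e_r}{e_l+e_r}\mu_z$; if $\alpha<\alpha_{z_r}$ set $z\gets z_l$ and $\mathit{price}\gets\mathit{price}+\mu_{z_r}$, else set $z\gets z_r$. Return $\mathit{price}+\frac{\beta_z-\alpha}{\beta_z-\alpha_z}\mu_z$. Then every value $\mu_{z}$ computed equals the corresponding coordinate of $\boldsymbol\mu$, the procedure returns the LCMM price of the bundle security for $I$, namely $\sum_{u\in\mathcal Z_K:\ I_u\subseteq I}\mu_u$, and it runs in time $\mathcal O(\mathrm{prec}(\alpha))$ (arithmetic operations counted as unit cost), where $\mathrm{prec}(\alpha)$ is the smallest integer $k\ge0$ such that $\alpha$ is an integer multiple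 of $2^{-k}$.
   Context: Fix an integer $K\ge1$, $N=2^K$, $\Omega=\{j/N:j=0,\dots,N-1\}$. Let $T^*$ be the complete binary tree of depth $K$ whose nodes are intervals: the root (level $0$) has $I_{\mathit{root}}=[0,1)$, and each node $z$ at level $k<K$ with $I_z=[\alpha_z,\beta_z)$ has children $\mathrm{left}(z)$, $\mathrm{right}(z)$ at level $k+1$ with intervals $[\alpha_z,\frac{\alpha_z+\beta_z}2)$ and $[\frac{\alpha_z+\beta_z}2,\beta_z)$. Let $\mathcal Z^*$ be its node set, $\mathcal Z_k$ the nodes at level $k$, $\mathrm{level}(z)$ the level of $z$, and $\mathcal Y^*=\mathcal Z^*\setminus\mathcal Z_K$. Fix liquidity parameters $b_k>0$ ($k=0,\dots,K$) and set $B_\ell=\sum_{k=\ell+1}^K b_k$ for $\ell=-1,\dots,K$. For $\tilde{\boldsymbol\theta}\in\mathbb R^{\mathcal Z^*}$ the direct-sum price vector is $\tilde p_z(\tilde{\boldsymbol\theta})=e^{\tilde\theta_z/b_k}/\sum_{z'\in\mathcal Z_k}e^{\tilde\theta_{z'}/b_k}$ for $z\in\mathcal Z_k$ (the gradient of $\tilde C(\tilde{\boldsymbol\theta})=\sum_k b_k\log\sum_{z\in\mathcal Z_k}e^{\tilde\theta_z/b_k}$). The constraint matrix $\mathbf A\in\mathbb R^{\mathcal Z^*\times\mathcal Y^*}$ has entries $A_{zy}=B_{\mathrm{level}(z)}$ if $z=y$, $-b_{\mathrm{level}(z)}$ if $I_z\subsetneq I_y$, and $0$ otherwise. An LCMM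 tree $T$ is a subtree of $T^*$ containing the root in which each node has either zero or two children in $T$, each node $z$ annotated with reals $\theta_z$ and $\eta_z$ (with $\eta_z$ treated as $0$ if $z\in\mathcal Z_K$). It represents $\boldsymbol\theta(T)\in\mathbb R^{\mathcal Z^*}$ and $\boldsymbol\eta(T)\in\mathbb R^{\mathcal Y^*}$ whose coordinates equal the annotations for nodes in $T$ and are $0$ for nodes not in $T$. $T$ is coherent if $\mathbf A^\top\tilde{\boldsymbol p}(\boldsymbol\theta(T)+\mathbf A\boldsymbol\eta(T))=\mathbf 0$; in that case $\boldsymbol\eta(T)$ minimizes $\boldsymbol\eta\mapsto\tilde C(\boldsymbol\theta(T)+\mathbf A\boldsymbol\eta)$ and the LCMM price vector is $\tilde{\boldsymbol p}(\boldsymbol\theta(T)+\mathbf A\boldsymbol\eta(T))$. *)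

theory Defs
  imports Complex_Main "HOL-Library.While_Combinator"
begin

text \<open>Nodes of the complete binary tree T* are pairs (k, j): level k, index j < 2^k,
  with interval [j/2^k, (j+1)/2^k).\<close>

type_synonym node = "nat \<times> nat"

definition alpha_of :: "node \<Rightarrow> real" where
  "alpha_of z = real (snd z) / 2 ^ fst z"

definition beta_of :: "node \<Rightarrow> real" where
  "beta_of z = (real (snd z) + 1) / 2 ^ fst z"

definition interval_of :: "node \<Rightarrow> real set" where
  "interval_of z = {alpha_of z ..< beta_of z}"

definition level :: "node \<Rightarrow> nat" where
  "level z = fst z"

definition root :: node where
  "root = (0, 0)"

definition left :: "node \<Rightarrow> node" where
  "left z = (Suc (fst z), 2 * snd z)"

definition right :: "node \<Rightarrow> node" where
  "right z = (Suc (fst z), 2 * snd z + 1)"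

definition Zlev :: "nat \<Rightarrow> node set" where
  "Zlev k = {(k, j) | j. j < 2 ^ k}"

definition Zstar :: "nat \<Rightarrow> node set" where
  "Zstar K = (\<Union>k\<le>K. Zlev k)"

definition Ystar :: "nat \<Rightarrow> node set" where
  "Ystar K = Zstar K - Zlev K"

definition Omega :: "nat \<Rightarrow> real set" where
  "Omega K = {real j / 2 ^ K | j. j < 2 ^ K}"

definition Bsum :: "nat \<Rightarrow> (nat \<Rightarrow> real) \<Rightarrow> nat \<Rightarrow> real" where
  "Bsum K b l = (\<Sum>k\<in>{l<..K}. b k)"

definition ptilde :: "nat \<Rightarrow> (nat \<Rightarrow> real) \<Rightarrow> (node \<Rightarrow> real) \<Rightarrow> node \<Rightarrow> real" where
  "ptilde K b th z =
     exp (th z / b (level z)) / (\<Sum>z'\<in>Zlev (level z). exp (th z' / b (level z)))"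

definition Amat :: "nat \<Rightarrow> (nat \<Rightarrow> real) \<Rightarrow> node \<Rightarrow> node \<Rightarrow> real" where
  "Amat K b z y =
     (if z = y then Bsum K b (level z)
      else if interval_of z \<subset> interval_of y then - b (level z)
      else 0)"

definition Amult :: "nat \<Rightarrow> (nat \<Rightarrow> real) \<Rightarrow> (node \<Rightarrow> real) \<Rightarrow> node \<Rightarrow> real" where
  "Amult K b eta z = (\<Sum>y\<in>Ystar K. Amat K b z y * eta y)"

definition ATmult :: "nat \<Rightarrow> (nat \<Rightarrow> real) \<Rightarrow> (node \<Rightarrow> real) \<Rightarrow> node \<Rightarrow> real" where
  "ATmult K b p y = (\<Sum>z\<in>Zstar K. Amat K b z y * p z)"

text \<open>An LCMM tree: its node set S (a subtree of T* containing the root, closed under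
  parents, each node having zero or two children in S) plus annotations th, eta.\<close>
definition is_lcmm_tree :: "nat \<Rightarrow> node set \<Rightarrow> bool" where
  "is_lcmm_tree K S \<longleftrightarrow>
     S \<subseteq> Zstar K \<and> root \<in> S \<and>
     (\<forall>k j. (k, j) \<in> S \<and> 0 < k \<longrightarrow> (k - 1, j div 2) \<in> S) \<and>
     (\<forall>z\<in>S. left z \<in> S \<longleftrightarrow> right z \<in> S)"

definition is_leaf :: "node set \<Rightarrow> node \<Rightarrow> bool" where
  "is_leaf S z \<longleftrightarrow> left z \<notin> S \<and> right z \<notin> S"

definition theta_vec :: "node set \<Rightarrow> (node \<Rightarrow> real) \<Rightarrow> node \<Rightarrow> real" where
  "theta_vec S th z = (if z \<in> S then th z else 0)"

definition eta_vec :: "nat \<Rightarrow> node set \<Rightarrow> (node \<Rightarrow> real) \<Rightarrow> node \<Rightarrow> real" where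
  "eta_vec K S eta y = (if y \<in> S \<and> y \<in> Ystar K then eta y else 0)"

definition lcmm_price :: "nat \<Rightarrow> (nat \<Rightarrow> real) \<Rightarrow> node set \<Rightarrow> (node \<Rightarrow> real)
    \<Rightarrow> (node \<Rightarrow> real) \<Rightarrow> node \<Rightarrow> real" where
  "lcmm_price K b S th eta =
     ptilde K b (\<lambda>z. theta_vec S th z + Amult K b (eta_vec K S eta) z)"

definition coherent :: "nat \<Rightarrow> (nat \<Rightarrow> real) \<Rightarrow> node set \<Rightarrow> (node \<Rightarrow> real)
    \<Rightarrow> (node \<Rightarrow> real) \<Rightarrow> bool" where
  "coherent K b S th eta \<longleftrightarrow>
     (\<forall>y\<in>Ystar K. ATmult K b (lcmm_price K b S th eta) y = 0)"

definition prec :: "real \<Rightarrow> nat" where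
  "prec a = (LEAST k. \<exists>m::int. a = real_of_int m / 2 ^ k)"

text \<open>Algorithm 3. State: (current node z, mu_z, price, log of all computed
  (node, mu value) pairs, number of loop iterations performed).\<close>
type_synonym alg_state = "node \<times> real \<times> real \<times> (node \<times> real) list \<times> nat"

definition alg_init :: alg_state where
  "alg_init = (root, 1, 0, [(root, 1)], 0)"

definition alg_cond :: "node set \<Rightarrow> real \<Rightarrow> alg_state \<Rightarrow> bool" where
  "alg_cond S a st = (case st of (z, mz, pr, hist, n) \<Rightarrow>
     alpha_of z \<noteq> a \<and> \<not> is_leaf S z)"

definition alg_step :: "nat \<Rightarrow> (nat \<Rightarrow> real) \<Rightarrow> node set \<Rightarrow> (node \<Rightarrow> real)
    \<Rightarrow> (node \<Rightarrow> real) \<Rightarrow> real \<Rightarrow> alg_state \<Rightarrow> alg_state" where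
  "alg_step K b S th eta a st = (case st of (z, mz, pr, hist, n) \<Rightarrow>
     let zl = left z; zr = right z; k = level zl;
         el = exp ((theta_vec S th zl + Bsum K b k * eta_vec K S eta zl) / b k);
         er = exp ((theta_vec S th zr + Bsum K b k * eta_vec K S eta zr) / b k);
         ml = el / (el + er) * mz;
         mr = er / (el + er) * mz;
         hist' = hist @ [(zl, ml), (zr, mr)]
     in if a < alpha_of zr then (zl, ml, pr + mr, hist', Suc n)
        else (zr, mr, pr, hist', Suc n))"

definition alg_run :: "nat \<Rightarrow> (nat \<Rightarrow> real) \<Rightarrow> node set \<Rightarrow> (node \<Rightarrow> real)
    \<Rightarrow> (node \<Rightarrow> real) \<Rightarrow> real \<Rightarrow> alg_state option" where
  "alg_run K b S th eta a = while_option (alg_cond S a) (alg_step K b S th eta a) alg_init"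

definition alg_output :: "real \<Rightarrow> alg_state \<Rightarrow> real" where
  "alg_output a st = (case st of (z, mz, pr, hist, n) \<Rightarrow>
     pr + (beta_of z - a) / (beta_of z - alpha_of z) * mz)"

end

theory Submission
  imports Defs
begin

(* Coherence at an inner node (l, i) says B_l times its price equals the b-weighted sum of
   the prices of all proper descendants; by downward induction on the level this forces every
   price to be the sum of the prices of its two children, so the price of a node is the price
   of the bundle of leaves of T* below it.  The common factor in the prices of two siblings
   cancels, hence the ratio e_l : e_r computed by the algorithm splits the parent's price exactly.
   Below a leaf of T the state theta + A eta is constant on the leaves of T*, so the price of
   the leaf is spread uniformly, which justifies the final linear interpolation.  Each round
   descends one level towards the leaf containing alpha and stops once alpha is a left endpoint,
   which happens at level prec(alpha) at the latest. *)

section \<open>Dyadic intervals\<close>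

lemma div_eq_iff_bounds: "0 < (n::nat) \<Longrightarrow> j div n = i \<longleftrightarrow> i * n \<le> j \<and> j < (i + 1) * n"
  by (metis add.commute div_nat_eqI dividend_less_div_times div_times_less_eq_dividend
      mult.commute mult_Suc plus_1_eq_Suc)

lemma dyadic_bounds_iff:
  "i * 2^k \<le> j * (2::nat)^l \<and> (j + 1) * 2^l \<le> (i + 1) * (2::nat)^k
     \<longleftrightarrow> l \<le> k \<and> j div 2^(k - l) = i"
proof
  assume h: "i * 2^k \<le> j * (2::nat)^l \<and> (j + 1) * 2^l \<le> (i + 1) * (2::nat)^k"
  then have "i * 2^k \<le> j * (2::nat)^l" "j * 2^l + 2^l \<le> i * 2^k + (2::nat)^k"
    by (simp_all add: algebra_simps)
  then have "(2::nat)^l \<le> 2^k" by linarith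
  then have lk: "l \<le> k" by simp
  then obtain d where kd: "k = l + d" by (metis le_add_diff_inverse)
  have "i * 2^d * 2^l \<le> j * 2^l" "(j + 1) * 2^l \<le> ((i + 1) * 2^d) * 2^l"
    using h kd by (simp_all add: power_add algebra_simps)
  then have "i * 2^d \<le> j" "j < (i + 1) * 2^d"
    by (simp_all only: mult_le_cancel2 Suc_le_eq[symmetric]) simp_all
  then show "l \<le> k \<and> j div 2^(k - l) = i" using lk kd div_eq_iff_bounds[of "2^d" j i] by simp
next
  assume h: "l \<le> k \<and> j div 2^(k - l) = i"
  then obtain d where kd: "k = l + d" by (metis le_add_diff_inverse)
  have "i * 2^d \<le> j" "j + 1 \<le> (i + 1) * 2^d"
    using h kd div_eq_iff_bounds[of "2^d" j i] by simp_all
  then have "i * 2^d * 2^l \<le> j * 2^l" "(j + 1) * 2^l \<le> (i + 1) * 2^d * 2^l"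
    using mult_le_mono1 by blast+
  then show "i * 2^k \<le> j * (2::nat)^l \<and> (j + 1) * 2^l \<le> (i + 1) * (2::nat)^k"
    using kd by (simp add: power_add algebra_simps)
qed

lemma interval_of_subset_iff:
  "interval_of (k, j) \<subseteq> interval_of (l, i) \<longleftrightarrow> l \<le> k \<and> j div 2^(k - l) = i"
proof -
  have "real j / 2^k < (real j + 1) / 2^k" by (simp add: divide_strict_right_mono)
  then have "interval_of (k, j) \<subseteq> interval_of (l, i) \<longleftrightarrow>
      real i / 2^l \<le> real j / 2^k \<and> (real j + 1) / 2^k \<le> (real i + 1) / 2^l"
    unfolding interval_of_def alpha_of_def beta_of_def by auto
  also have "\<dots> \<longleftrightarrow> real (i * 2^k) \<le> real (j * 2^l) \<and> real ((j + 1) * 2^l) \<le> real ((i + 1) * 2^k)"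
    by (simp add: field_simps)
  also have "\<dots> \<longleftrightarrow> l \<le> k \<and> j div 2^(k - l) = i"
    by (simp only: of_nat_le_iff dyadic_bounds_iff)
  finally show ?thesis .
qed

lemma interval_of_psubset_iff:
  "interval_of (k, j) \<subset> interval_of (l, i) \<longleftrightarrow> l < k \<and> j div 2^(k - l) = i"
proof -
  have "interval_of (k, j) \<subset> interval_of (l, i) \<longleftrightarrow>
      (l \<le> k \<and> j div 2^(k - l) = i) \<and> \<not> (k \<le> l \<and> i div 2^(l - k) = j)"
    by (auto simp: interval_of_subset_iff[symmetric])
  also have "\<dots> \<longleftrightarrow> l < k \<and> j div 2^(k - l) = i" by (cases "l < k") auto
  finally show ?thesis .
qed

lemma level_Pair [simp]: "level (k, j) = k"
  by (simp add: level_def)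

lemma mem_Zlev [simp]: "(k, j) \<in> Zlev k' \<longleftrightarrow> k = k' \<and> j < 2^k"
  by (auto simp: Zlev_def)

lemma mem_Zstar [simp]: "(k, j) \<in> Zstar K \<longleftrightarrow> k \<le> K \<and> j < 2^k"
  by (auto simp: Zstar_def)

lemma mem_Ystar [simp]: "(k, j) \<in> Ystar K \<longleftrightarrow> k < K \<and> j < 2^k"
  by (cases "k = K") (auto simp: Ystar_def)

lemma finite_Zlev [simp]: "finite (Zlev k)"
proof -
  have "Zlev k = Pair k ` {..<2^k}" by (auto simp: Zlev_def)
  then show ?thesis by simp
qed

lemma finite_Zstar [simp]: "finite (Zstar K)"
  by (simp add: Zstar_def)

lemma finite_Ystar [simp]: "finite (Ystar K)"
  by (simp add: Ystar_def)

lemma div_power2_div_power2: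
  "a \<le> b \<Longrightarrow> b \<le> c \<Longrightarrow> (j::nat) div 2^(c - b) div 2^(b - a) = j div 2^(c - a)"
proof -
  assume "a \<le> b" "b \<le> c"
  then have "c - a = (c - b) + (b - a)" by simp
  then show ?thesis by (simp add: power_add div_mult2_eq)
qed

lemma alpha_of_rescale: "n \<le> K \<Longrightarrow> alpha_of (n, i) = real (i * 2^(K - n)) / 2^K"
proof -
  assume "n \<le> K"
  then have "(2::real)^K = 2^n * 2^(K - n)" by (simp flip: power_add)
  then show ?thesis unfolding alpha_of_def by simp
qed

lemma beta_of_rescale: "n \<le> K \<Longrightarrow> beta_of (n, i) = real ((i + 1) * 2^(K - n)) / 2^K"
proof -
  assume "n \<le> K"
  then have "(2::real)^K = 2^n * 2^(K - n)" by (simp flip: power_add)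
  then show ?thesis unfolding beta_of_def by (simp add: field_simps)
qed

lemma dyadic_block_end_le: "n \<le> K \<Longrightarrow> i < 2^n \<Longrightarrow> (i + 1) * 2^(K - n) \<le> (2::nat)^K"
  using mult_le_mono1[of "i + 1" "2^n" "2^(K - n)"] by (simp flip: power_add)

lemma divide_power2_less_iff: "real x / 2^K < real y / 2^K \<longleftrightarrow> x < y"
  by (simp add: divide_less_cancel)

lemma child_interval_psubset_iff:
  assumes "d < 2"
  shows "interval_of (Suc l, 2 * i + d) \<subset> interval_of y \<longleftrightarrow> interval_of (l, i) \<subseteq> interval_of y"
proof -
  obtain m c where y: "y = (m, c)" by (cases y)
  have "(2 * i + d) div 2^(Suc l - m) = i div 2^(l - m)" if "m \<le> l"
    using that assms by (simp add: Suc_diff_le div_mult2_eq)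
  then show ?thesis unfolding y interval_of_psubset_iff interval_of_subset_iff by auto
qed

definition block_sum :: "(node \<Rightarrow> real) \<Rightarrow> nat \<Rightarrow> nat \<Rightarrow> nat \<Rightarrow> real" where
  "block_sum q k l i = (\<Sum>j\<in>{i * 2^(k - l)..<(i + 1) * 2^(k - l)}. q (k, j))"

lemma block_sum_self [simp]: "block_sum q k k i = q (k, i)"
  by (simp add: block_sum_def)

lemma block_sum_split:
  assumes "l < k"
  shows "block_sum q k l i = block_sum q k (Suc l) (2 * i) + block_sum q k (Suc l) (2 * i + 1)"
proof -
  obtain e where e: "k - l = Suc e" using assms by (metis Suc_diff_Suc)
  have "k - Suc l = e" "i * 2^(k - l) = 2 * i * 2^e" "(i + 1) * 2^(k - l) = (2 * i + 1 + 1) * 2^e"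
    using e by simp_all
  then show ?thesis unfolding block_sum_def
    by (simp only:) (rule sum.atLeastLessThan_concat[symmetric], auto)
qed

lemma block_sum_of_additive:
  assumes "\<And>l' i'. l \<le> l' \<Longrightarrow> l' < k \<Longrightarrow> i' < 2^l' \<Longrightarrow>
             q (l', i') = q (Suc l', 2 * i') + q (Suc l', 2 * i' + 1)"
    and "l \<le> k" and "i < 2^l"
  shows "block_sum q k l i = q (l, i)"
  using assms
proof (induction "k - l" arbitrary: l i)
  case 0
  then show ?case by simp
next
  case (Suc m)
  then have "l < k" "2 * i < 2^Suc l" "2 * i + 1 < 2^Suc l" by auto
  then have "block_sum q k l i = q (Suc l, 2 * i) + q (Suc l, 2 * i + 1)"
    using Suc by (simp add: block_sum_split)
  also have "\<dots> = q (l, i)" using Suc.prems \<open>l < k\<close> by simp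
  finally show ?case .
qed

lemma proper_descendants_eq:
  assumes "i < 2^l"
  shows "{z \<in> Zstar K. interval_of z \<subset> interval_of (l, i)} =
           Sigma {l<..K} (\<lambda>k. {i * 2^(k - l)..<(i + 1) * 2^(k - l)})"
proof (intro set_eqI)
  fix z :: node
  obtain k j where z: "z = (k, j)" by (cases z)
  show "z \<in> {z \<in> Zstar K. interval_of z \<subset> interval_of (l, i)} \<longleftrightarrow>
          z \<in> Sigma {l<..K} (\<lambda>k. {i * 2^(k - l)..<(i + 1) * 2^(k - l)})"
  proof (cases "l < k")
    case True
    have "(i + 1) * 2^(k - l) \<le> 2^l * 2^(k - l)" using assms by (intro mult_le_mono1) simp
    also have "\<dots> = 2^k" using True by (simp flip: power_add)
    finally show ?thesis unfolding z using True div_eq_iff_bounds[of "2^(k - l)" j i]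
      by (auto simp: interval_of_psubset_iff intro: less_le_trans)
  qed (auto simp: z interval_of_psubset_iff)
qed

lemma lcmm_tree_ancestor:
  assumes "is_lcmm_tree K S" and "(k, j) \<in> S" and "l \<le> k"
  shows "(l, j div 2^(k - l)) \<in> S"
  using assms(2,3)
proof (induction k arbitrary: j)
  case (Suc k)
  show ?case
  proof (cases "l = Suc k")
    case False
    then have "l \<le> k" using Suc.prems by simp
    moreover have "(k, j div 2) \<in> S" using assms(1) Suc.prems unfolding is_lcmm_tree_def by force
    ultimately have "(l, j div 2 div 2^(k - l)) \<in> S" using Suc.IH by blast
    then show ?thesis using \<open>l \<le> k\<close> by (simp add: div_mult2_eq Suc_diff_le)
  qed (use Suc.prems in simp)
qed simp

lemma lcmm_tree_leaf_no_descendant: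
  assumes "is_lcmm_tree K S" and "is_leaf S (l, i)" and "l < m" and "c div 2^(m - l) = i"
  shows "(m, c) \<notin> S"
proof
  assume "(m, c) \<in> S"
  then have "(Suc l, c div 2^(m - Suc l)) \<in> S" using lcmm_tree_ancestor assms(1,3) by simp
  moreover have "c div 2^(m - Suc l) div 2 = i"
    using div_power2_div_power2[of l "Suc l" m c] assms(3,4) by simp
  then have "(Suc l, c div 2^(m - Suc l)) \<in> {left (l, i), right (l, i)}"
    unfolding left_def right_def by auto
  ultimately show False using assms(2) unfolding is_leaf_def by auto
qed

lemma lcmm_tree_leaf_descendant_psubset_iff:
  assumes "is_lcmm_tree K S" and "is_leaf S (l, i)" and "l < k" and "j div 2^(k - l) = i"
    and "(m, c) \<in> S" and "m < k"
  shows "interval_of (k, j) \<subset> interval_of (m, c) \<longleftrightarrow> interval_of (l, i) \<subseteq> interval_of (m, c)"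
proof (cases "m \<le> l")
  case True
  then have "j div 2^(k - l) div 2^(l - m) = j div 2^(k - m)"
    using assms(3) by (intro div_power2_div_power2) auto
  then show ?thesis
    unfolding interval_of_psubset_iff interval_of_subset_iff using True assms(3,4,6) by auto
next
  case False
  have "\<not> interval_of (k, j) \<subset> interval_of (m, c)"
  proof
    assume "interval_of (k, j) \<subset> interval_of (m, c)"
    then have "c = j div 2^(k - m)" by (simp add: interval_of_psubset_iff)
    moreover have "j div 2^(k - m) div 2^(m - l) = j div 2^(k - l)"
      using False assms(6) by (intro div_power2_div_power2) auto
    ultimately have "c div 2^(m - l) = i" using assms(4) by simp
    then show False using lcmm_tree_leaf_no_descendant assms(1,2,5) False by force
  qed
  then show ?thesis using False by (simp add: interval_of_subset_iff)
qed

lemma Amult_eta_vec: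
  "Amult K b (eta_vec K S eta) u = Bsum K b (level u) * eta_vec K S eta u
     - b (level u) * (\<Sum>y\<in>{y \<in> Ystar K. interval_of u \<subset> interval_of y}. eta_vec K S eta y)"
proof -
  have "Amult K b (eta_vec K S eta) u =
      (\<Sum>y\<in>Ystar K. (if u = y then Bsum K b (level u) * eta_vec K S eta y else 0))
      - (\<Sum>y\<in>Ystar K. if interval_of u \<subset> interval_of y then b (level u) * eta_vec K S eta y else 0)"
    unfolding Amult_def Amat_def sum_subtractf[symmetric] by (intro sum.cong) auto
  moreover have "(\<Sum>y\<in>Ystar K. (if u = y then Bsum K b (level u) * eta_vec K S eta y else 0)) =
      Bsum K b (level u) * eta_vec K S eta u"
    by (simp add: eta_vec_def)
  moreover have "(\<Sum>y\<in>Ystar K. if interval_of u \<subset> interval_of y then b (level u) * eta_vec K S eta y else 0) =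
      b (level u) * (\<Sum>y\<in>{y \<in> Ystar K. interval_of u \<subset> interval_of y}. eta_vec K S eta y)"
    by (simp add: sum.inter_filter sum_distrib_left if_distrib cong: if_cong)
  ultimately show ?thesis by simp
qed

section \<open>Prices of a coherent LCMM tree\<close>

locale coherent_lcmm =
  fixes K :: nat and b :: "nat \<Rightarrow> real" and S :: "node set" and th eta :: "node \<Rightarrow> real"
  assumes b_pos: "\<forall>k\<le>K. 0 < b k"
    and tree: "is_lcmm_tree K S"
    and coherent: "coherent K b S th eta"
begin

abbreviation price :: "node \<Rightarrow> real" where
  "price \<equiv> lcmm_price K b S th eta"

abbreviation state :: "node \<Rightarrow> real" where
  "state \<equiv> \<lambda>z. theta_vec S th z + Amult K b (eta_vec K S eta) z"

abbreviation weight :: "node \<Rightarrow> real" where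
  "weight z \<equiv> exp ((theta_vec S th z + Bsum K b (level z) * eta_vec K S eta z) / b (level z))"

lemma price_eq:
  "price z = exp (state z / b (level z)) / (\<Sum>z'\<in>Zlev (level z). exp (state z' / b (level z)))"
  by (simp add: lcmm_price_def ptilde_def)

lemma price_root: "price root = 1"
proof -
  have "Zlev 0 = {root}" by (auto simp: Zlev_def root_def)
  then show ?thesis by (simp add: price_eq root_def)
qed

lemma tree_subset_Zstar: "z \<in> S \<Longrightarrow> z \<in> Zstar K"
  using tree unfolding is_lcmm_tree_def by auto

lemma Bsum_pos: "l < K \<Longrightarrow> 0 < Bsum K b l"
  unfolding Bsum_def using b_pos by (intro sum_pos) auto

lemma coherence_block_eq:
  assumes "l < K" "i < 2^l"
  shows "Bsum K b l * price (l, i) = (\<Sum>k\<in>{l<..K}. b k * block_sum price k l i)"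
proof -
  let ?y = "(l, i)"
  let ?D = "{z \<in> Zstar K. interval_of z \<subset> interval_of ?y}"
  have y: "?y \<in> Ystar K" "?y \<in> Zstar K" using assms by auto
  have "0 = ATmult K b price ?y" using coherent y unfolding coherent_def by auto
  also have "\<dots> = (\<Sum>z\<in>Zstar K. (if z = ?y then Bsum K b (level z) * price z else 0))
      - (\<Sum>z\<in>Zstar K. (if interval_of z \<subset> interval_of ?y then b (level z) * price z else 0))"
    unfolding ATmult_def Amat_def sum_subtractf[symmetric] by (intro sum.cong) auto
  also have "\<dots> = Bsum K b l * price ?y - (\<Sum>z\<in>?D. b (level z) * price z)"
    using y by (simp add: sum.inter_filter)
  also have "(\<Sum>z\<in>?D. b (level z) * price z) = (\<Sum>k\<in>{l<..K}. b k * block_sum price k l i)"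
    unfolding proper_descendants_eq[OF assms(2)] block_sum_def sum_distrib_left
    by (subst sum.Sigma) (auto simp: case_prod_beta' level_def)
  finally show ?thesis by simp
qed

lemma price_additive:
  assumes "l < K" "i < 2^l"
  shows "price (l, i) = price (Suc l, 2 * i) + price (Suc l, 2 * i + 1)"
  using assms
proof (induction "K - l" arbitrary: l i rule: less_induct)
  case less
  have blocks: "block_sum price k l i = price (Suc l, 2 * i) + price (Suc l, 2 * i + 1)"
    if "k \<in> {l<..K}" for k
  proof -
    have "block_sum price k (Suc l) c = price (Suc l, c)" if "c < 2^Suc l" for c
      using less.hyps \<open>k \<in> {l<..K}\<close> that by (intro block_sum_of_additive) auto
    then show ?thesis using that less.prems by (simp add: block_sum_split)
  qed
  have "Bsum K b l * price (l, i) = (\<Sum>k\<in>{l<..K}. b k * (price (Suc l, 2 * i) + price (Suc l, 2 * i + 1)))"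
    unfolding coherence_block_eq[OF less.prems] using blocks by simp
  also have "\<dots> = Bsum K b l * (price (Suc l, 2 * i) + price (Suc l, 2 * i + 1))"
    by (simp add: Bsum_def sum_distrib_right)
  finally show ?case using Bsum_pos[OF less.prems(1)] by simp
qed

lemma price_block_sum: "l \<le> k \<Longrightarrow> k \<le> K \<Longrightarrow> i < 2^l \<Longrightarrow> block_sum price k l i = price (l, i)"
  by (intro block_sum_of_additive price_additive) auto

text \<open>The part of the state of a child that comes from the proper ancestors is shared with its
  sibling and cancels in the normalisation; the remainder is what the algorithm exponentiates.\<close>

lemma price_children_ratio:
  "\<exists>E. \<forall>d<2. price (Suc l, 2 * i + d) = weight (Suc l, 2 * i + d) * E"
proof -
  define C where "C = - b (Suc l) * (\<Sum>y\<in>{y \<in> Ystar K. interval_of (l, i) \<subseteq> interval_of y}. eta_vec K S eta y)"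
  have "state (Suc l, 2 * i + d) =
      theta_vec S th (Suc l, 2 * i + d) + Bsum K b (Suc l) * eta_vec K S eta (Suc l, 2 * i + d) + C"
    if "d < 2" for d
    unfolding Amult_eta_vec C_def child_interval_psubset_iff[OF that] by simp
  then show ?thesis
    by (intro exI[of _ "exp (C / b (Suc l)) / (\<Sum>z'\<in>Zlev (Suc l). exp (state z' / b (Suc l)))"])
      (simp add: price_eq add_divide_distrib exp_add)
qed

lemma state_below_leaf:
  assumes "is_leaf S (l, i)" "l < K" "j div 2^(K - l) = i"
  shows "state (K, j) =
    - b K * (\<Sum>y\<in>{y \<in> Ystar K. interval_of (l, i) \<subseteq> interval_of y}. eta_vec K S eta y)"
proof -
  have "(K, j) \<notin> S" using lcmm_tree_leaf_no_descendant[OF tree assms] .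
  moreover have "(\<Sum>y\<in>{y \<in> Ystar K. interval_of (K, j) \<subset> interval_of y}. eta_vec K S eta y) =
      (\<Sum>y\<in>{y \<in> Ystar K. interval_of (l, i) \<subseteq> interval_of y}. eta_vec K S eta y)"
  proof -
    have "(if interval_of (K, j) \<subset> interval_of y then eta_vec K S eta y else 0) =
        (if interval_of (l, i) \<subseteq> interval_of y then eta_vec K S eta y else 0)"
      if "y \<in> Ystar K" for y
    proof (cases "y \<in> S")
      case True
      obtain m c where "y = (m, c)" by (cases y)
      then show ?thesis
        using lcmm_tree_leaf_descendant_psubset_iff[OF tree assms(1,2,3)] True that by simp
    qed (simp add: eta_vec_def)
    then show ?thesis unfolding sum.inter_filter[OF finite_Ystar] by (rule sum.cong[OF refl])
  qed
  ultimately show ?thesis unfolding Amult_eta_vec by (simp add: theta_vec_def eta_vec_def)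
qed

lemma price_below_leaf:
  assumes "(l, i) \<in> S" "is_leaf S (l, i)" "j div 2^(K - l) = i"
  shows "price (K, j) * 2^(K - l) = price (l, i)"
proof (cases "l = K")
  case False
  have "l \<le> K" "i < 2^l" using tree_subset_Zstar[OF assms(1)] by auto
  with False have "l < K" by simp
  have same: "price (K, j') = price (K, j)" if "j' \<in> {i * 2^(K - l)..<(i + 1) * 2^(K - l)}" for j'
  proof -
    have "j' div 2^(K - l) = i" using that div_eq_iff_bounds[of "2^(K - l)"] by auto
    then show ?thesis using state_below_leaf[OF assms(2) \<open>l < K\<close>] assms(3) by (simp add: price_eq)
  qed
  have "price (l, i) = block_sum price K l i" using price_block_sum \<open>l \<le> K\<close> \<open>i < 2^l\<close> by simp
  also have "\<dots> = price (K, j) * 2^(K - l)"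
    unfolding block_sum_def using same by (simp add: algebra_simps)
  finally show ?thesis by simp
qed (use assms(3) in simp)

lemma alg_step_price:
  assumes "(l, i) \<in> S" "\<not> is_leaf S (l, i)"
  shows "alg_step K b S th eta a ((l, i), price (l, i), pr, hist, n) =
    (let zl = left (l, i); zr = right (l, i); hist' = hist @ [(zl, price zl), (zr, price zr)]
     in if a < alpha_of zr then (zl, price zl, pr + price zr, hist', Suc n)
        else (zr, price zr, pr, hist', Suc n))"
proof -
  have child: "(Suc l, 2 * i) \<in> S" using tree assms unfolding is_lcmm_tree_def is_leaf_def left_def right_def by auto
  then have "l < K" "i < 2^l" using tree_subset_Zstar[OF child] tree_subset_Zstar[OF assms(1)] by auto
  obtain E where E: "\<forall>d<2. price (Suc l, 2 * i + d) = weight (Suc l, 2 * i + d) * E"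
    using price_children_ratio by blast
  let ?el = "weight (Suc l, 2 * i)" and ?er = "weight (Suc l, 2 * i + 1)"
  have "price (Suc l, 2 * i) = ?el * E" "price (Suc l, 2 * i + 1) = ?er * E"
    using E[rule_format, of 0] E[rule_format, of 1] by simp_all
  moreover have "price (l, i) = price (Suc l, 2 * i) + price (Suc l, 2 * i + 1)"
    using price_additive \<open>l < K\<close> \<open>i < 2^l\<close> .
  moreover have "0 < ?el + ?er" by (intro add_pos_pos) auto
  ultimately have "?el / (?el + ?er) * price (l, i) = price (Suc l, 2 * i)"
    "?er / (?el + ?er) * price (l, i) = price (Suc l, 2 * i + 1)"
    by (simp_all add: field_simps)
  then show ?thesis unfolding alg_step_def left_def right_def Let_def by simp
qed

end

section \<open>Termination and output of the algorithm\<close>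

lemma dvd_of_prec_le:
  assumes "prec (real j / 2^K) \<le> n" "n \<le> K"
  shows "2^(K - n) dvd j"
proof -
  define k where "k = prec (real j / 2^K)"
  have "\<exists>m::int. real j / 2^K = real_of_int m / 2^k"
    unfolding k_def prec_def by (rule LeastI[of _ K]) (intro exI[of _ "int j"], simp)
  then obtain m :: int where m: "real j / 2^K = real_of_int m / 2^k" by blast
  have "k \<le> K" using assms k_def by simp
  then have "real j = real_of_int m * 2^(K - k)" using m by (simp add: power_diff field_simps)
  then have "real_of_int (int j) = real_of_int (m * 2^(K - k))" by simp
  then have "int j = m * 2^(K - k)" by (simp only: of_int_eq_iff)
  moreover have "(2::int)^(K - n) dvd 2^(K - k)" using assms k_def by (simp add: le_imp_power_dvd)
  ultimately have "int (2^(K - n)) dvd int j" by simp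
  then show ?thesis by (simp only: int_dvd_int_iff)
qed

lemma bundle_leaves_eq:
  "{u \<in> Zlev K. interval_of u \<subseteq> {real j0 / 2^K..<1}} = Pair K ` {j0..<2^K}"
proof -
  have leaf_iff: "interval_of (K, j) \<subseteq> {real j0 / 2^K..<1} \<longleftrightarrow> j0 \<le> j \<and> j < 2^K" for j
  proof -
    have "real j / 2^K < (real j + 1) / 2^K" by (simp add: divide_strict_right_mono)
    then have "interval_of (K, j) \<subseteq> {real j0 / 2^K..<1} \<longleftrightarrow>
        real j0 / 2^K \<le> real j / 2^K \<and> (real j + 1) / 2^K \<le> 1"
      unfolding interval_of_def alpha_of_def beta_of_def by auto
    also have "\<dots> \<longleftrightarrow> real j0 \<le> real j \<and> real (Suc j) \<le> real ((2::nat)^K)"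
      by (simp add: field_simps)
    finally show ?thesis by (simp only: of_nat_le_iff Suc_le_eq)
  qed
  show ?thesis
  proof (intro set_eqI iffI)
    fix u assume "u \<in> {u \<in> Zlev K. interval_of u \<subseteq> {real j0 / 2^K..<1}}"
    moreover obtain k j where "u = (k, j)" by (cases u)
    ultimately show "u \<in> Pair K ` {j0..<2^K}" using leaf_iff by auto
  next
    fix u assume "u \<in> Pair K ` {j0..<2^K}"
    then obtain j where "u = (K, j)" "j0 \<le> j" "j < 2^K" by auto
    then show "u \<in> {u \<in> Zlev K. interval_of u \<subseteq> {real j0 / 2^K..<1}}"
      using leaf_iff[of j] by simp
  qed
qed

locale alg_run_on_leaf = coherent_lcmm +
  fixes j0 :: nat
  assumes j0_less: "j0 < 2^K"
begin

abbreviation alpha :: real where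
  "alpha \<equiv> real j0 / 2^K"

definition leaf_ancestor :: "nat \<Rightarrow> node" where
  "leaf_ancestor n = (n, j0 div 2^(K - n))"

definition tail_price :: "nat \<Rightarrow> real" where
  "tail_price m = (\<Sum>j\<in>{m..<2^K}. price (K, j))"

text \<open>The accumulated price is that of all leaves to the right of the current node.\<close>

definition alg_inv :: "alg_state \<Rightarrow> bool" where
  "alg_inv st \<longleftrightarrow> (case st of (z, mz, pr, hist, n) \<Rightarrow>
     z = leaf_ancestor n \<and> z \<in> S \<and> mz = price z \<and> pr = tail_price ((snd z + 1) * 2^(K - n)) \<and>
     (\<forall>(u, m)\<in>set hist. m = price u) \<and> n \<le> prec alpha)"

lemma alg_inv_init: "alg_inv alg_init"
proof -
  have "root \<in> S" using tree unfolding is_lcmm_tree_def by auto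
  moreover have "tail_price (2^K) = 0" by (simp add: tail_price_def)
  ultimately show ?thesis
    using j0_less price_root by (simp add: alg_inv_def alg_init_def leaf_ancestor_def root_def)
qed

lemma tail_price_split:
  assumes "n \<le> K" "i < 2^n"
  shows "tail_price (i * 2^(K - n)) = price (n, i) + tail_price ((i + 1) * 2^(K - n))"
proof -
  have "i * 2^(K - n) \<le> (i + 1) * 2^(K - n)" by simp
  then have "tail_price (i * 2^(K - n)) = block_sum price K n i + tail_price ((i + 1) * 2^(K - n))"
    unfolding tail_price_def block_sum_def using dyadic_block_end_le[OF assms]
    by (intro sum.atLeastLessThan_concat[symmetric])
  then show ?thesis using price_block_sum assms by simp
qed

lemma leaf_ancestor_Suc:
  assumes "n < K"
  shows "leaf_ancestor (Suc n) =
    (if alpha < alpha_of (right (leaf_ancestor n)) then left (leaf_ancestor n) else right (leaf_ancestor n))"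
proof -
  obtain e where e: "K - n = Suc e" using assms by (metis Suc_diff_Suc)
  then have "K - Suc n = e" by simp
  define i where "i = j0 div 2^(K - n)"
  have "alpha_of (Suc n, 2 * i + 1) = real ((2 * i + 1) * 2^e) / 2^K"
    using alpha_of_rescale[of "Suc n" K "2 * i + 1"] assms \<open>K - Suc n = e\<close> by simp
  then have "alpha < alpha_of (Suc n, 2 * i + 1) \<longleftrightarrow> j0 < (2 * i + 1) * 2^e"
    by (simp only: divide_power2_less_iff)
  also have "\<dots> \<longleftrightarrow> j0 div 2^e < 2 * i + 1" by (simp add: div_less_iff_less_mult)
  finally have goes_left: "alpha < alpha_of (Suc n, 2 * i + 1) \<longleftrightarrow> j0 div 2^e < 2 * i + 1" .
  have "j0 div 2^e div 2 = i" unfolding i_def e power_Suc2 by (rule div_mult2_eq[symmetric])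
  then have "j0 div 2^e = 2 * i \<or> j0 div 2^e = 2 * i + 1" by arith
  then show ?thesis
    using goes_left unfolding leaf_ancestor_def left_def right_def \<open>K - Suc n = e\<close> i_def[symmetric] by auto
qed

lemma alg_inv_step:
  assumes "alg_inv st" and "alg_cond S alpha st"
  shows "alg_inv (alg_step K b S th eta alpha st) \<and>
         (alg_step K b S th eta alpha st, st) \<in> measure (\<lambda>s. K - fst (fst s))"
proof -
  obtain z mz pr hist n where st: "st = (z, mz, pr, hist, n)" by (cases st)
  define i where "i = j0 div 2^(K - n)"
  have z: "z = (n, i)" "z = leaf_ancestor n" and "z \<in> S" and mz: "mz = price z"
    and pr: "pr = tail_price ((i + 1) * 2^(K - n))" and hist: "\<forall>(u, m)\<in>set hist. m = price u"
    using assms(1) unfolding st alg_inv_def leaf_ancestor_def i_def by auto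
  have "alpha_of z \<noteq> alpha" and inner: "\<not> is_leaf S z" using assms(2) unfolding st alg_cond_def by auto
  have "left z \<in> S" "right z \<in> S" using tree \<open>z \<in> S\<close> inner unfolding is_lcmm_tree_def is_leaf_def by auto
  then have "n < K" "i < 2^n"
    using tree_subset_Zstar[OF \<open>left z \<in> S\<close>] tree_subset_Zstar[OF \<open>z \<in> S\<close>] by (auto simp: z left_def)
  then obtain e where e: "K - n = Suc e" by (metis Suc_diff_Suc)
  then have e': "K - Suc n = e" by simp
  have "\<not> prec alpha \<le> n"
  proof
    assume "prec alpha \<le> n"
    then have "2^(K - n) dvd j0" using dvd_of_prec_le \<open>n < K\<close> by simp
    then have "i * 2^(K - n) = j0" by (simp add: i_def)
    then have "alpha_of z = alpha" using \<open>n < K\<close> alpha_of_rescale[of n K i] by (simp add: z)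
    then show False using \<open>alpha_of z \<noteq> alpha\<close> by simp
  qed
  define hist' where "hist' = hist @ [(left z, price (left z)), (right z, price (right z))]"
  have hist': "\<forall>(u, m)\<in>set hist'. m = price u" using hist by (auto simp: hist'_def)
  have step: "alg_step K b S th eta alpha st =
      (if alpha < alpha_of (right z) then (left z, price (left z), pr + price (right z), hist', Suc n)
       else (right z, price (right z), pr, hist', Suc n))"
    using alg_step_price[OF \<open>z \<in> S\<close>[unfolded z(1)] inner[unfolded z(1)]]
    by (simp add: st z(1) mz hist'_def Let_def)
  have descend: "leaf_ancestor (Suc n) = (if alpha < alpha_of (right z) then left z else right z)"
    using leaf_ancestor_Suc[OF \<open>n < K\<close>] z(2) by simp
  have "(2 * i + 1 + 1) * 2^e = (i + 1) * 2^(K - n)" using e by simp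
  then have tail: "tail_price ((2 * i + 1) * 2^e) = price (right z) + pr"
    using tail_price_split[of "Suc n" "2 * i + 1"] \<open>n < K\<close> \<open>i < 2^n\<close>
    by (simp add: pr z(1) right_def e')
  have measure: "K - Suc n < K - n" using \<open>n < K\<close> by simp
  show ?thesis
  proof (cases "alpha < alpha_of (right z)")
    case True
    then show ?thesis
      using step descend tail \<open>left z \<in> S\<close> hist' \<open>\<not> prec alpha \<le> n\<close> measure
      by (simp add: alg_inv_def st e' z(1) left_def)
  next
    case False
    then show ?thesis
      using step descend \<open>right z \<in> S\<close> hist' \<open>\<not> prec alpha \<le> n\<close> measure \<open>(2 * i + 1 + 1) * 2^e = _\<close>
      by (simp add: alg_inv_def st e' z(1) right_def pr)
  qed
qed

lemma last_block_price:
  assumes "(n, i) \<in> S" and "j0 div 2^(K - n) = i" and "alpha_of (n, i) = alpha \<or> is_leaf S (n, i)"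
  shows "(\<Sum>j\<in>{j0..<(i + 1) * 2^(K - n)}. price (K, j)) =
    (beta_of (n, i) - alpha) / (beta_of (n, i) - alpha_of (n, i)) * price (n, i)"
proof -
  define d where "d = K - n"
  have "n \<le> K" "i < 2^n" using tree_subset_Zstar[OF assms(1)] by auto
  have j0: "i * 2^d \<le> j0" "j0 < (i + 1) * 2^d"
    using div_eq_iff_bounds[of "2^d" j0 i] assms(2) unfolding d_def by auto
  have "(\<Sum>j\<in>{j0..<(i + 1) * 2^d}. price (K, j)) = (real ((i + 1) * 2^d) - j0) / 2^d * price (n, i)"
  proof (cases "alpha_of (n, i) = alpha")
    case True
    then have "real j0 = real (i * 2^d)"
      using alpha_of_rescale[OF \<open>n \<le> K\<close>, of i] by (simp add: d_def field_simps)
    then have "j0 = i * 2^d" by (simp only: of_nat_eq_iff)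
    moreover have "(\<Sum>j\<in>{i * 2^d..<(i + 1) * 2^d}. price (K, j)) = price (n, i)"
      using price_block_sum[OF \<open>n \<le> K\<close> order_refl \<open>i < 2^n\<close>] by (simp only: block_sum_def d_def)
    ultimately show ?thesis by (simp add: algebra_simps)
  next
    case False
    then have leaf: "is_leaf S (n, i)" using assms(3) by simp
    have "price (K, j) = price (n, i) / 2^d" if "j \<in> {j0..<(i + 1) * 2^d}" for j
    proof -
      have "j div 2^d = i" using that j0 div_eq_iff_bounds[of "2^d" j i] by auto
      then show ?thesis using price_below_leaf[OF assms(1) leaf] by (simp add: d_def field_simps)
    qed
    then show ?thesis using j0 by (simp add: of_nat_diff)
  qed
  also have "(real ((i + 1) * 2^d) - j0) / 2^d = (beta_of (n, i) - alpha) / (beta_of (n, i) - alpha_of (n, i))"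
    using alpha_of_rescale[OF \<open>n \<le> K\<close>] beta_of_rescale[OF \<open>n \<le> K\<close>] by (simp add: d_def field_simps)
  finally show ?thesis unfolding d_def .
qed

lemma alg_output_eq:
  assumes "alg_inv st" and "\<not> alg_cond S alpha st"
  shows "alg_output alpha st = (\<Sum>u\<in>{u \<in> Zlev K. interval_of u \<subseteq> {alpha..<1}}. price u)"
proof -
  obtain z mz pr hist n where st: "st = (z, mz, pr, hist, n)" by (cases st)
  define i where "i = j0 div 2^(K - n)"
  have z: "z = (n, i)" and "z \<in> S" and mz: "mz = price z" and pr: "pr = tail_price ((i + 1) * 2^(K - n))"
    using assms(1) unfolding st alg_inv_def leaf_ancestor_def i_def by auto
  have stop: "alpha_of z = alpha \<or> is_leaf S z" using assms(2) unfolding st alg_cond_def by auto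
  have "n \<le> K" "i < 2^n" using tree_subset_Zstar \<open>z \<in> S\<close> z by auto
  have "(\<Sum>u\<in>{u \<in> Zlev K. interval_of u \<subseteq> {alpha..<1}}. price u) = tail_price j0"
    unfolding bundle_leaves_eq tail_price_def by (subst sum.reindex) (auto simp: inj_on_def)
  also have "\<dots> = (\<Sum>j\<in>{j0..<(i + 1) * 2^(K - n)}. price (K, j)) + pr"
    unfolding pr tail_price_def using dyadic_block_end_le[OF \<open>n \<le> K\<close> \<open>i < 2^n\<close>]
      div_eq_iff_bounds[of "2^(K - n)" j0 i]
    by (intro sum.atLeastLessThan_concat[symmetric]) (auto simp: i_def)
  also have "(\<Sum>j\<in>{j0..<(i + 1) * 2^(K - n)}. price (K, j)) =
      (beta_of z - alpha) / (beta_of z - alpha_of z) * price z"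
    using last_block_price \<open>z \<in> S\<close> stop unfolding z i_def by blast
  finally show ?thesis unfolding st alg_output_def mz by simp
qed

end

theorem theorem5:
  fixes K :: nat and b :: "nat \<Rightarrow> real" and S :: "node set"
    and th eta :: "node \<Rightarrow> real" and a :: real
  assumes "1 \<le> K"
    and "\<forall>k\<le>K. 0 < b k"
    and "is_lcmm_tree K S"
    and "coherent K b S th eta"
    and "a \<in> Omega K"
  shows "\<exists>z mz pr hist n.
           alg_run K b S th eta a = Some (z, mz, pr, hist, n) \<and>
           (\<forall>(u, m) \<in> set hist. m = lcmm_price K b S th eta u) \<and>
           alg_output a (z, mz, pr, hist, n) =
             (\<Sum>u\<in>{u\<in>Zlev K. interval_of u \<subseteq> {a..<1}}. lcmm_price K b S th eta u) \<and>
           n \<le> prec a"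
proof -
  from assms(5) obtain j0 where "j0 < 2^K" and a: "a = real j0 / 2^K" by (auto simp: Omega_def)
  interpret alg_run_on_leaf K b S th eta j0 using assms \<open>j0 < 2^K\<close> by unfold_locales auto
  have "\<exists>t. alg_run K b S th eta a = Some t"
    unfolding alg_run_def a
    by (rule wf_rel_while_option_Some[where R = "measure (\<lambda>s. K - fst (fst s))" and P = alg_inv])
       (use alg_inv_step alg_inv_init in auto)
  then obtain t where t: "alg_run K b S th eta a = Some t" by blast
  have "alg_inv t"
    using while_option_rule[where P = alg_inv, OF _ t[unfolded alg_run_def a] alg_inv_init] alg_inv_step
    by blast
  moreover have "\<not> alg_cond S alpha t" using while_option_stop t unfolding alg_run_def a .
  ultimately have "alg_output alpha t = (\<Sum>u\<in>{u \<in> Zlev K. interval_of u \<subseteq> {alpha..<1}}. price u)"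
    by (rule alg_output_eq)
  moreover obtain z mz pr hist n where "t = (z, mz, pr, hist, n)" by (cases t)
  ultimately show ?thesis using t \<open>alg_inv t\<close> unfolding a alg_inv_def by auto
qed

end
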